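(* Let $(\Gamma,\rho)$ be a voltage graph with $\Gamma$ strongly connected and $G$ a finite group. Then $(\Gamma,\rho)$ is structurally balanced if and only if $f(c)=\mathbf 1$ for every cycle $c$ of $\Gamma$.
   Context: $\Gamma=(V,E)$ simple digraph, $e_{ij}$ the edge $v_i\to v_j$, $\rho:E\to G$, $\mathbf 1$ the identity. Semi-walk $w=v_{i_1}a_1\dots a_{n-1}v_{i_n}$ with each $a_j\in\{e_{i_ji_{j+1}},e_{i_{j+1}i_j}\}$; walk if all $a_j=e_{i_ji_{j+1}}$; closed if $v_{i_1}=v_{i_n}$. A cycle is a closed walk with no repeated vertices except start equals end (a single vertex is a trivial cycle). Net voltage $f(w)=\bar\rho(a_1)\cdots\bar\rho(a_{n-1})$ with $\bar\rho(a_j)=\rho(a_j)$ for forward edges and $\rho(a_j)^{-1}$ for backward ones ($f=\mathbf 1$ on a single vertex). Structurally balanced: $f(w)=\mathbf 1$ for every closed semi-walk. Strongly connected: for every ordered pair of distinct vertices there is a walk from the first to the second. *)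

theory Defs
  imports "HOL-Algebra.Group"
begin

definition simple_digraph :: "'v set \<Rightarrow> ('v \<times> 'v) set \<Rightarrow> bool" where
  "simple_digraph V E \<longleftrightarrow> finite V \<and> E \<subseteq> V \<times> V \<and> (\<forall>v. (v, v) \<notin> E)"

text \<open>A semi-walk is given by its vertex sequence vs and a list ds of directions:
  ds!k = True means the k-th step uses the edge vs!k -> vs!(k+1) (forward),
  ds!k = False means it uses the edge vs!(k+1) -> vs!k (backward).\<close>
definition semi_walk :: "'v set \<Rightarrow> ('v \<times> 'v) set \<Rightarrow> 'v list \<Rightarrow> bool list \<Rightarrow> bool" where
  "semi_walk V E vs ds \<longleftrightarrow> vs \<noteq> [] \<and> set vs \<subseteq> V \<and> length ds + 1 = length vs \<and>
     (\<forall>k < length ds. if ds ! k then (vs ! k, vs ! Suc k) \<in> E else (vs ! Suc k, vs ! k) \<in> E)"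

definition walk :: "'v set \<Rightarrow> ('v \<times> 'v) set \<Rightarrow> 'v list \<Rightarrow> bool" where
  "walk V E vs \<longleftrightarrow> semi_walk V E vs (replicate (length vs - 1) True)"

definition closed :: "'v list \<Rightarrow> bool" where
  "closed vs \<longleftrightarrow> hd vs = last vs"

text \<open>A cycle: a closed walk with no repeated vertices except start = end
  (a single vertex is a trivial cycle).\<close>
definition cycle :: "'v set \<Rightarrow> ('v \<times> 'v) set \<Rightarrow> 'v list \<Rightarrow> bool" where
  "cycle V E vs \<longleftrightarrow> walk V E vs \<and> closed vs \<and> distinct (tl vs)"

fun net_voltage :: "('g, 'b) monoid_scheme \<Rightarrow> ('v \<times> 'v \<Rightarrow> 'g) \<Rightarrow> 'v list \<Rightarrow> bool list \<Rightarrow> 'g" where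
  "net_voltage G \<rho> (u # v # vs) (d # ds) =
     (if d then \<rho> (u, v) else inv\<^bsub>G\<^esub> (\<rho> (v, u))) \<otimes>\<^bsub>G\<^esub> net_voltage G \<rho> (v # vs) ds"
| "net_voltage G \<rho> _ _ = \<one>\<^bsub>G\<^esub>"

definition structurally_balanced ::
  "('g, 'b) monoid_scheme \<Rightarrow> 'v set \<Rightarrow> ('v \<times> 'v) set \<Rightarrow> ('v \<times> 'v \<Rightarrow> 'g) \<Rightarrow> bool" where
  "structurally_balanced G V E \<rho> \<longleftrightarrow>
     (\<forall>vs ds. semi_walk V E vs ds \<and> closed vs \<longrightarrow> net_voltage G \<rho> vs ds = \<one>\<^bsub>G\<^esub>)"

definition strongly_connected :: "'v set \<Rightarrow> ('v \<times> 'v) set \<Rightarrow> bool" where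
  "strongly_connected V E \<longleftrightarrow>
     (\<forall>u\<in>V. \<forall>v\<in>V. u \<noteq> v \<longrightarrow> (\<exists>vs. walk V E vs \<and> hd vs = u \<and> last vs = v))"

end

theory Submission
  imports Defs
begin

text \<open>If every cycle has trivial voltage then so does every closed walk, because a closed walk
  that repeats a vertex splits into two shorter closed walks. Fix a root r. By strong
  connectivity every vertex v is reached by a walk from r, and the voltage p v of such a walk
  does not depend on the walk: any walk back from v to r closes it up. Comparing the walks to u
  and to v for an edge u \<rightarrow> v gives \<rho>(u,v) = (p u)\<inverse> p v, so the voltage of every semi-walk
  telescopes to (p start)\<inverse> p end, which is trivial on closed semi-walks.\<close>

abbreviation walk_voltage :: "('g, 'b) monoid_scheme \<Rightarrow> ('v \<times> 'v \<Rightarrow> 'g) \<Rightarrow> 'v list \<Rightarrow> 'g" where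
  "walk_voltage G \<rho> vs \<equiv> net_voltage G \<rho> vs (replicate (length vs - 1) True)"

lemma semi_walk_Cons_Cons:
  "semi_walk V E (u # v # vs) (d # ds) \<longleftrightarrow>
     u \<in> V \<and> (if d then (u, v) \<in> E else (v, u) \<in> E) \<and> semi_walk V E (v # vs) ds"
  by (auto simp: semi_walk_def less_Suc_eq_0_disj split: if_splits)

lemma semi_walk_singleton: "semi_walk V E [v] ds \<longleftrightarrow> v \<in> V \<and> ds = []"
  by (auto simp: semi_walk_def)

lemma not_walk_Nil [simp]: "\<not> walk V E []"
  by (simp add: walk_def semi_walk_def)

lemma walk_singleton [simp]: "walk V E [v] \<longleftrightarrow> v \<in> V"
  by (simp add: walk_def semi_walk_singleton)

lemma walk_Cons_Cons [simp]:
  "walk V E (u # v # vs) \<longleftrightarrow> (u, v) \<in> E \<and> u \<in> V \<and> walk V E (v # vs)"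
  by (auto simp: walk_def semi_walk_Cons_Cons)

lemma walk_append_iff: "walk V E (xs @ y # ys) \<longleftrightarrow> walk V E (xs @ [y]) \<and> walk V E (y # ys)"
proof (induction xs)
  case Nil
  then show ?case by (cases ys) auto
next
  case (Cons x xs)
  then show ?case by (cases xs) auto
qed

lemma walk_split_loop:
  assumes "walk V E (xs @ y # ys @ y # zs)"
  shows "walk V E (xs @ [y])" and "walk V E (y # ys @ [y])" and "walk V E (y # zs)"
  using assms walk_append_iff[of V E xs y "ys @ y # zs"] walk_append_iff[of V E "y # ys" y zs]
  by auto

lemma strongly_connected_walk:
  assumes "strongly_connected V E" and "u \<in> V" and "v \<in> V"
  obtains vs where "walk V E vs" and "hd vs = u" and "last vs = v"
proof (cases "u = v")
  case True
  then show ?thesis using that[of "[v]"] assms(3) by simp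
next
  case False
  then show ?thesis using assms that unfolding strongly_connected_def by blast
qed

locale voltage_graph = group G for G :: "('g, 'b) monoid_scheme" (structure) +
  fixes V :: "'v set" and E :: "('v \<times> 'v) set" and \<rho> :: "'v \<times> 'v \<Rightarrow> 'g"
  assumes voltage_closed: "\<rho> \<in> E \<rightarrow> carrier G"
begin

lemma edge_voltage_closed [simp]: "(u, v) \<in> E \<Longrightarrow> \<rho> (u, v) \<in> carrier G"
  using voltage_closed by blast

lemma walk_voltage_closed: "walk V E vs \<Longrightarrow> walk_voltage G \<rho> vs \<in> carrier G"
  by (induction vs rule: induct_list012) auto

lemma walk_voltage_append:
  assumes "walk V E (xs @ [y])" and "walk V E (y # ys)"
  shows "walk_voltage G \<rho> (xs @ y # ys) = walk_voltage G \<rho> (xs @ [y]) \<otimes> walk_voltage G \<rho> (y # ys)"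
  using assms
proof (induction xs rule: induct_list012)
  case 1
  then show ?case using walk_voltage_closed[of "y # ys"] by simp
next
  case (2 x)
  then show ?case using walk_voltage_closed[of "y # ys"] by auto
next
  case (3 x z zs)
  then show ?case
    using walk_voltage_closed[of "z # zs @ [y]"] walk_voltage_closed[of "y # ys"]
    by (auto simp: m_assoc)
qed

lemma walk_voltage_drop_loop:
  assumes "walk V E (xs @ y # ys @ y # zs)" and "walk_voltage G \<rho> (y # ys @ [y]) = \<one>"
  shows "walk_voltage G \<rho> (xs @ y # ys @ y # zs) = walk_voltage G \<rho> (xs @ y # zs)"
proof -
  note walks = walk_split_loop[OF assms(1)]
  have "walk V E (y # ys @ y # zs)"
    using walks(2,3) walk_append_iff[of V E "y # ys" y zs] by simp
  then have "walk_voltage G \<rho> (xs @ y # ys @ y # zs) =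
      walk_voltage G \<rho> (xs @ [y]) \<otimes> walk_voltage G \<rho> (y # ys @ y # zs)"
    by (rule walk_voltage_append[OF walks(1)])
  also have "walk_voltage G \<rho> (y # ys @ y # zs) =
      walk_voltage G \<rho> (y # ys @ [y]) \<otimes> walk_voltage G \<rho> (y # zs)"
    using walk_voltage_append[of "y # ys" y zs] walks(2,3) by simp
  also have "\<dots> = walk_voltage G \<rho> (y # zs)"
    using assms(2) walk_voltage_closed[OF walks(3)] by simp
  also have "walk_voltage G \<rho> (xs @ [y]) \<otimes> walk_voltage G \<rho> (y # zs) = walk_voltage G \<rho> (xs @ y # zs)"
    by (rule walk_voltage_append[OF walks(1,3), symmetric])
  finally show ?thesis .
qed

lemma closed_walk_voltage_eq_one:
  assumes cycles: "\<And>c. cycle V E c \<Longrightarrow> walk_voltage G \<rho> c = \<one>"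
  shows "walk V E vs \<Longrightarrow> hd vs = last vs \<Longrightarrow> walk_voltage G \<rho> vs = \<one>"
proof (induction "length vs" arbitrary: vs rule: less_induct)
  case less
  obtain a ws where vs: "vs = a # ws"
    using less.prems by (cases vs) auto
  show ?case
  proof (cases "distinct ws")
    case True
    then have "cycle V E vs"
      using less.prems vs by (simp add: cycle_def closed_def)
    then show ?thesis by (rule cycles)
  next
    case False
    then obtain xs y ys zs where "ws = xs @ [y] @ ys @ [y] @ zs"
      using not_distinct_decomp by blast
    then have vs_loop: "vs = (a # xs) @ y # ys @ y # zs"
      using vs by simp
    have walk_loop: "walk V E ((a # xs) @ y # ys @ y # zs)"
      using less.prems(1) vs_loop by simp
    note walks = walk_split_loop[OF walk_loop]
    have "walk_voltage G \<rho> (y # ys @ [y]) = \<one>"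
      by (rule less.hyps) (use walks(2) vs_loop in simp_all)
    then have "walk_voltage G \<rho> vs = walk_voltage G \<rho> ((a # xs) @ y # zs)"
      unfolding vs_loop by (rule walk_voltage_drop_loop[OF walk_loop])
    also have "\<dots> = \<one>"
    proof (rule less.hyps)
      show "length ((a # xs) @ y # zs) < length vs"
        using vs_loop by simp
      show "walk V E ((a # xs) @ y # zs)"
        using walks(1,3) walk_append_iff[of V E "a # xs" y zs] by simp
      show "hd ((a # xs) @ y # zs) = last ((a # xs) @ y # zs)"
        using less.prems(2) vs_loop by simp
    qed
    finally show ?thesis .
  qed
qed

lemma walk_voltage_round_trip:
  assumes cycles: "\<And>c. cycle V E c \<Longrightarrow> walk_voltage G \<rho> c = \<one>"
    and "walk V E xs" and "walk V E ys" and "last xs = hd ys" and "hd xs = last ys"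
  shows "walk_voltage G \<rho> xs \<otimes> walk_voltage G \<rho> ys = \<one>"
proof -
  define y where "y = last xs"
  have xs: "butlast xs @ [y] = xs"
    using assms(2) y_def by (cases xs rule: rev_cases) auto
  obtain t where ys: "y # t = ys"
    using assms(3,4) y_def by (cases ys) auto
  have "walk V E (butlast xs @ y # t)"
    using walk_append_iff[of V E "butlast xs" y t] assms(2,3) unfolding xs ys by simp
  moreover have "hd (butlast xs @ y # t) = last (butlast xs @ y # t)"
    using arg_cong[OF xs, of hd] assms(5) ys[symmetric] by (auto simp: hd_append)
  ultimately have "walk_voltage G \<rho> (butlast xs @ y # t) = \<one>"
    using closed_walk_voltage_eq_one[OF cycles] by blast
  then show ?thesis
    using walk_voltage_append[of "butlast xs" y t] assms(2,3) unfolding xs ys by simp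
qed

definition potential :: "('v \<Rightarrow> 'g) \<Rightarrow> bool" where
  "potential p \<longleftrightarrow> p \<in> V \<rightarrow> carrier G \<and>
     (\<forall>u v. (u, v) \<in> E \<longrightarrow> u \<in> V \<longrightarrow> v \<in> V \<longrightarrow> \<rho> (u, v) = inv p u \<otimes> p v)"

lemma potential_closed: "potential p \<Longrightarrow> v \<in> V \<Longrightarrow> p v \<in> carrier G"
  by (auto simp: potential_def)

lemma potential_edge:
  "potential p \<Longrightarrow> (u, v) \<in> E \<Longrightarrow> u \<in> V \<Longrightarrow> v \<in> V \<Longrightarrow> \<rho> (u, v) = inv p u \<otimes> p v"
  by (simp add: potential_def)

lemma potential_exists:
  assumes cycles: "\<And>c. cycle V E c \<Longrightarrow> walk_voltage G \<rho> c = \<one>"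
    and "strongly_connected V E" and "r \<in> V"
  shows "\<exists>p. potential p"
proof -
  define path where "path v = (SOME w. walk V E w \<and> hd w = r \<and> last w = v)" for v
  have path: "walk V E (path v) \<and> hd (path v) = r \<and> last (path v) = v" if "v \<in> V" for v
    unfolding path_def
    by (rule someI_ex) (meson strongly_connected_walk[OF assms(2,3) that])
  define p where "p v = walk_voltage G \<rho> (path v)" for v
  have p_closed: "p v \<in> carrier G" if "v \<in> V" for v
    unfolding p_def using path[OF that] by (blast intro: walk_voltage_closed)
  have "\<rho> (u, v) = inv p u \<otimes> p v" if uv: "(u, v) \<in> E" "u \<in> V" "v \<in> V" for u v
  proof -
    obtain w where w: "walk V E w" "hd w = v" "last w = r"
      using strongly_connected_walk[OF assms(2) uv(3) assms(3)] by blast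
    then have uw: "walk V E (u # w)"
      using uv by (cases w) auto
    have "p u \<otimes> (\<rho> (u, v) \<otimes> walk_voltage G \<rho> w) = \<one>"
      using walk_voltage_round_trip[OF cycles, of "path u" "u # w"] path[OF uv(2)] uw w p_def
      by (cases w) auto
    then have "inv (walk_voltage G \<rho> w) = p u \<otimes> \<rho> (u, v)"
      using p_closed[OF uv(2)] walk_voltage_closed[OF w(1)] uv(1)
      by (simp add: inv_equality m_assoc)
    moreover have "inv (walk_voltage G \<rho> w) = p v"
      using walk_voltage_round_trip[OF cycles, of "path v" w] path[OF uv(3)] w p_def
        p_closed[OF uv(3)] walk_voltage_closed[OF w(1)]
      by (simp add: inv_equality)
    ultimately show ?thesis
      using p_closed uv inv_solve_left by simp
  qed
  then have "potential p"
    using p_closed by (simp add: potential_def)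
  then show ?thesis by blast
qed

lemma net_voltage_potential:
  assumes "potential p"
  shows "semi_walk V E vs ds \<Longrightarrow> net_voltage G \<rho> vs ds = inv p (hd vs) \<otimes> p (last vs)"
proof (induction ds arbitrary: vs)
  case Nil
  then obtain v where "vs = [v]" "v \<in> V"
    by (cases vs) (auto simp: semi_walk_def)
  then show ?case
    using potential_closed[OF assms] by simp
next
  case (Cons d ds)
  then obtain u v ws where vs: "vs = u # v # ws"
    by (cases vs rule: remdups_adj.cases) (auto simp: semi_walk_def)
  have step: "u \<in> V" "if d then (u, v) \<in> E else (v, u) \<in> E" and rest: "semi_walk V E (v # ws) ds"
    using Cons.prems unfolding vs semi_walk_Cons_Cons by auto
  have vertices: "v \<in> V" "last (v # ws) \<in> V"
    using rest by (auto simp: semi_walk_def)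
  have p_closed: "p u \<in> carrier G" "p v \<in> carrier G" "p (last (v # ws)) \<in> carrier G"
    using potential_closed[OF assms] step(1) vertices by auto
  have "(if d then \<rho> (u, v) else inv (\<rho> (v, u))) = inv p u \<otimes> p v"
    using potential_edge[OF assms] step vertices p_closed by (auto simp: inv_mult_group)
  then have "net_voltage G \<rho> vs (d # ds) = inv p u \<otimes> p v \<otimes> (inv p v \<otimes> p (last (v # ws)))"
    using Cons.IH[OF rest] vs by simp
  also have "\<dots> = inv p u \<otimes> p (last (v # ws))"
    using p_closed by (simp add: m_assoc[symmetric]) (simp add: m_assoc)
  finally show ?case
    using vs by simp
qed

lemma potential_structurally_balanced:
  assumes "potential p"
  shows "structurally_balanced G V E \<rho>"
  unfolding structurally_balanced_def closed_def
proof (intro allI impI)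
  fix vs ds
  assume closed_walk: "semi_walk V E vs ds \<and> hd vs = last vs"
  then have "last vs \<in> V"
    by (auto simp: semi_walk_def)
  then have "p (last vs) \<in> carrier G"
    by (rule potential_closed[OF assms])
  then show "net_voltage G \<rho> vs ds = \<one>"
    using net_voltage_potential[OF assms] closed_walk by simp
qed

end

theorem corollary1:
  fixes G :: "('g, 'b) monoid_scheme" and V :: "'v set" and E :: "('v \<times> 'v) set"
    and \<rho> :: "'v \<times> 'v \<Rightarrow> 'g"
  assumes "group G" and "finite (carrier G)"
    and "simple_digraph V E"
    and "\<rho> \<in> E \<rightarrow> carrier G"
    and "strongly_connected V E"
  shows "structurally_balanced G V E \<rho> \<longleftrightarrow>
         (\<forall>c. cycle V E c \<longrightarrow> net_voltage G \<rho> c (replicate (length c - 1) True) = \<one>\<^bsub>G\<^esub>)"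
proof
  assume "structurally_balanced G V E \<rho>"
  then show "\<forall>c. cycle V E c \<longrightarrow> walk_voltage G \<rho> c = \<one>\<^bsub>G\<^esub>"
    unfolding structurally_balanced_def cycle_def walk_def by blast
next
  assume cycles: "\<forall>c. cycle V E c \<longrightarrow> walk_voltage G \<rho> c = \<one>\<^bsub>G\<^esub>"
  interpret voltage_graph G V E \<rho>
    using assms(1,4) by (simp add: voltage_graph_def voltage_graph_axioms_def)
  show "structurally_balanced G V E \<rho>"
  proof (cases "V = {}")
    case True
    then show ?thesis
      by (simp add: structurally_balanced_def semi_walk_def)
  next
    case False
    then obtain r where "r \<in> V"
      by blast
    then obtain p where "potential p"
      using potential_exists cycles assms(5) by blast
    then show ?thesis
      by (rule potential_structurally_balanced)
  qed
qed

end
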